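(* Let $r\ge 1$ and let $T=T_E=(p_1,\ldots,p_{r-1})$ be an untwisted multiplicity tree of a local Arf good semigroup $S(T)\subseteq\mathbb{N}^r$, where $E=\{M_1,\ldots,M_r\}$ is the ordered collection of multiplicity sequences along its branches. Then $$ g(S(T))=\sum_{k=1}^r g(\mathrm{AS}(M_k))+\sum_{k=1}^{r-1}p_k, $$ where $\mathrm{AS}(M_k)$ is the Arf numerical semigroup associated to $M_k$.
   Context: A multiplicity sequence is a nonincreasing sequence $(m_n)_{n\ge1}$ of positive integers, eventually equal to $1$, such that for every $n$ there is $l(n)\ge n+1$ with $m_n=\sum_{k=n+1}^{l(n)}m_k$. It is written $M=[m_1,\ldots,m_k]$ with $m_k$ its last entry different from $1$ (and $M=[1]$ for the constant sequence); $l(M)=k$ is its length and $M[i]=m_i$. Its associated Arf numerical semigroup is $\mathrm{AS}(M)=\{0,m_1,m_1+m_2,\ldots,m_1+\cdots+m_k\}\cup\{n: n\ge m_1+\cdots+m_k\}$ (and $\mathrm{AS}([1])=\mathbb{N}$). The genus of a numerical semigroup $S$ is $|\mathbb{N}\setminus S|$. A good semigroup $S\subseteq\mathbb{N}^r$ is a submonoid of $(\mathbb{N}^r,+)$ such that: (i) $\min(a,b)\in S$ (componentwise) for $a,b\in S$; (ii) if $a,b\in S$ with $a[i]=b[i]$, there is $c\in S$ with $c[i]>a[i]$, $c[j]\ge\min(a[j],b[j])$ for $j\ne i$, and $c[j]=\min(a[j],b[j])$ whenever $a[j]\ne b[j]$; (iii) there is $\delta$ with $\delta+\mathbb{N}^r\subseteq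 S$. The minimal such $\delta=(c[1],\ldots,c[r])$ is the conductor. $S$ is local if $\mathbf 0$ is the only element of $S$ with some zero coordinate, and Arf if $\{\beta\in S:\beta\ge\alpha\}-\alpha$ is a semigroup for every $\alpha\in S$ (usual partial order on $\mathbb{N}^r$). The genus of a good semigroup $S$ with conductor $\delta$ is $g(S)=\sum_{k=1}^r c[k]-d(S\setminus C)$, where $C=\delta+\mathbb{N}^r$ and $d(S\setminus C)$ is the length $n$ of a saturated chain $\mathbf 0=s_0<s_1<\cdots<s_n=\delta$ in $S$ (one that cannot be refined inside $S$). The multiplicity tree of a local Arf good semigroup $S\subseteq\mathbb{N}^r$ is a rooted tree with $r$ branches whose nodes $\mathbf n_i^j\in\mathbb{N}^r$ (node on branch $i$, level $j$; all branches share the root at level 1) satisfy $S=\{\mathbf 0\}\cup\{\sum_{\mathbf n\in T'}\mathbf n : T'$ a finite subtree rooted at the root$\}$; the $i$-th coordinates of the nodes along branch $i$ form a multiplicity sequence $M_i$, and $\mathbf n_i^j[h]=0$ iff the node is not on branch $h$. Such a tree is described by $E=\{M_1,\ldots,M_r\}$ and the numbers $p_{i,j}$ = highest level at which branches $i$ and $j$ are glued. The tree is untwisted if $p_{i,j}=\min\{p_{i,i+1},\ldots,p_{j-1,j}\}$ for all $i<j$; it is then denoted $T_E=(p_1,\ldots,p_{r-1})$ with $p_i=p_{i,i+1}$, and $S(T)$ denotes the associated semigroup. *)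

theory Defs
  imports Main
begin

text \<open>A sequence is a function nat => nat, indexed from 1 (the value at 0 is ignored).\<close>

definition multiplicity_sequence :: "(nat \<Rightarrow> nat) \<Rightarrow> bool" where
  "multiplicity_sequence m \<longleftrightarrow>
     (\<forall>n\<ge>1. m n > 0) \<and>
     (\<forall>n\<ge>1. m (Suc n) \<le> m n) \<and>
     (\<exists>N\<ge>1. \<forall>n\<ge>N. m n = 1) \<and>
     (\<forall>n\<ge>1. \<exists>l\<ge>n+1. m n = (\<Sum>k=n+1..l. m k))"

definition ms_length :: "(nat \<Rightarrow> nat) \<Rightarrow> nat" where
  "ms_length m = (if \<forall>n\<ge>1. m n = 1 then 0 else (GREATEST n. n \<ge> 1 \<and> m n \<noteq> 1))"

definition AS :: "(nat \<Rightarrow> nat) \<Rightarrow> nat set" where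
  "AS m = {\<Sum>i=1..j. m i | j. j \<le> ms_length m} \<union> {n. n \<ge> (\<Sum>i=1..ms_length m. m i)}"

definition ns_genus :: "nat set \<Rightarrow> nat" where
  "ns_genus S = card (UNIV - S)"

text \<open>Elements of N^r are functions nat => nat vanishing outside {..<r};
  the order on functions is the componentwise order.\<close>

definition vecs :: "nat \<Rightarrow> (nat \<Rightarrow> nat) set" where
  "vecs r = {v. \<forall>i\<ge>r. v i = 0}"

definition good_semigroup :: "nat \<Rightarrow> (nat \<Rightarrow> nat) set \<Rightarrow> bool" where
  "good_semigroup r S \<longleftrightarrow>
     S \<subseteq> vecs r \<and> (\<lambda>_. 0) \<in> S \<and>
     (\<forall>a\<in>S. \<forall>b\<in>S. (\<lambda>i. a i + b i) \<in> S) \<and>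
     (\<forall>a\<in>S. \<forall>b\<in>S. (\<lambda>i. min (a i) (b i)) \<in> S) \<and>
     (\<forall>a\<in>S. \<forall>b\<in>S. \<forall>i<r. a i = b i \<longrightarrow>
        (\<exists>c\<in>S. c i > a i \<and>
           (\<forall>j<r. j \<noteq> i \<longrightarrow> c j \<ge> min (a j) (b j)) \<and>
           (\<forall>j<r. j \<noteq> i \<and> a j \<noteq> b j \<longrightarrow> c j = min (a j) (b j)))) \<and>
     (\<exists>d\<in>vecs r. \<forall>v\<in>vecs r. d \<le> v \<longrightarrow> v \<in> S)"

definition local_sg :: "nat \<Rightarrow> (nat \<Rightarrow> nat) set \<Rightarrow> bool" where
  "local_sg r S \<longleftrightarrow> (\<forall>a\<in>S. (\<exists>i<r. a i = 0) \<longrightarrow> a = (\<lambda>_. 0))"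

definition arf_sg :: "(nat \<Rightarrow> nat) set \<Rightarrow> bool" where
  "arf_sg S \<longleftrightarrow> (\<forall>\<alpha>\<in>S. \<forall>\<beta>\<in>S. \<forall>\<gamma>\<in>S. \<alpha> \<le> \<beta> \<longrightarrow> \<alpha> \<le> \<gamma> \<longrightarrow>
      (\<lambda>i. \<beta> i + \<gamma> i - \<alpha> i) \<in> S)"

definition conductor :: "nat \<Rightarrow> (nat \<Rightarrow> nat) set \<Rightarrow> (nat \<Rightarrow> nat)" where
  "conductor r S = (LEAST d. d \<in> vecs r \<and> (\<forall>v\<in>vecs r. d \<le> v \<longrightarrow> v \<in> S))"

definition sat_chain :: "(nat \<Rightarrow> nat) set \<Rightarrow> nat \<Rightarrow> (nat \<Rightarrow> nat \<Rightarrow> nat) \<Rightarrow> (nat \<Rightarrow> nat) \<Rightarrow> bool" where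
  "sat_chain S n s d \<longleftrightarrow> s 0 = (\<lambda>_. 0) \<and> s n = d \<and> (\<forall>i\<le>n. s i \<in> S) \<and>
     (\<forall>i<n. s i < s (Suc i) \<and> \<not> (\<exists>t\<in>S. s i < t \<and> t < s (Suc i)))"

definition good_genus :: "nat \<Rightarrow> (nat \<Rightarrow> nat) set \<Rightarrow> nat" where
  "good_genus r S = (\<Sum>k<r. conductor r S k)
      - (SOME n. \<exists>s. sat_chain S n s (conductor r S))"

text \<open>Branches 0..r-1, levels 1,2,...; branch k carries multiplicity sequence M k;
  p k (k < r-1) is the highest level where branches k and k+1 are glued.
  Untwisted: branches i, h are glued up to level min of p over [min i h, max i h).\<close>

definition glue :: "(nat \<Rightarrow> nat) \<Rightarrow> nat \<Rightarrow> nat \<Rightarrow> nat" where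
  "glue p i h = Min (p ` {min i h..<max i h})"

definition on_branch :: "nat \<Rightarrow> (nat \<Rightarrow> nat) \<Rightarrow> nat \<Rightarrow> nat \<Rightarrow> nat \<Rightarrow> bool" where
  "on_branch r p i j h \<longleftrightarrow> h < r \<and> (h = i \<or> j \<le> glue p i h)"

text \<open>The node at level j on branch i, identified by its level and the set of branches through it.\<close>
definition node :: "nat \<Rightarrow> (nat \<Rightarrow> nat) \<Rightarrow> nat \<Rightarrow> nat \<Rightarrow> nat \<times> nat set" where
  "node r p i j = (j, {h. on_branch r p i j h})"

definition tree_nodes :: "nat \<Rightarrow> (nat \<Rightarrow> nat) \<Rightarrow> (nat \<times> nat set) set" where
  "tree_nodes r p = {node r p i j | i j. i < r \<and> j \<ge> 1}"

definition node_vec :: "(nat \<Rightarrow> nat \<Rightarrow> nat) \<Rightarrow> nat \<times> nat set \<Rightarrow> (nat \<Rightarrow> nat)" where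
  "node_vec M nd = (\<lambda>h. if h \<in> snd nd then M h (fst nd) else 0)"

definition rooted_subtree :: "nat \<Rightarrow> (nat \<Rightarrow> nat) \<Rightarrow> (nat \<times> nat set) set \<Rightarrow> bool" where
  "rooted_subtree r p N \<longleftrightarrow> finite N \<and> N \<subseteq> tree_nodes r p \<and> node r p 0 1 \<in> N \<and>
     (\<forall>i<r. \<forall>j\<ge>1. node r p i (Suc j) \<in> N \<longrightarrow> node r p i j \<in> N)"

definition tree_semigroup :: "nat \<Rightarrow> (nat \<Rightarrow> nat \<Rightarrow> nat) \<Rightarrow> (nat \<Rightarrow> nat) \<Rightarrow> (nat \<Rightarrow> nat) set" where
  "tree_semigroup r M p = {\<lambda>_. 0} \<union>
     {(\<lambda>h. \<Sum>nd\<in>N. node_vec M nd h) | N. rooted_subtree r p N}"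

end

theory Submission
  imports Defs
begin

text \<open>A rooted subtree of the multiplicity tree is determined by the depth \<open>e h\<close> it reaches on
  each branch \<open>h\<close>, and \<open>S(T)\<close> is the image of these depth vectors under the order embedding
  \<open>e \<mapsto> (\<Sum>j\<le>e h. M h j)\<^sub>h\<close>. Any two comparable subtrees are linked by adding one node at a time,
  so a saturated chain from \<open>0\<close> to the conductor has as many steps as the subtree of the conductor
  has nodes. That subtree has depth \<open>max (l(M\<^sub>h)) p\<^sub>h\<^sub>-\<^sub>1 p\<^sub>h\<close> on branch \<open>h\<close>; counting its nodes on the
  leftmost branch through them, branch \<open>h > 0\<close> contributes its depth minus the \<open>p\<^sub>h\<^sub>-\<^sub>1\<close> levels it shares
  with branch \<open>h - 1\<close>. On the other hand the conductor's \<open>h\<close>-th coordinate exceeds that depth by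
  exactly the genus of \<open>AS(M\<^sub>h)\<close>.\<close>

definition saturated_chain :: "'a::order set \<Rightarrow> nat \<Rightarrow> (nat \<Rightarrow> 'a) \<Rightarrow> 'a \<Rightarrow> 'a \<Rightarrow> bool" where
  "saturated_chain S n s a b \<longleftrightarrow> s 0 = a \<and> s n = b \<and> (\<forall>i\<le>n. s i \<in> S) \<and>
     (\<forall>i<n. s i < s (Suc i) \<and> \<not> (\<exists>t\<in>S. s i < t \<and> t < s (Suc i)))"

lemma sat_chain_iff_saturated_chain: "sat_chain S n s d \<longleftrightarrow> saturated_chain S n s (\<lambda>_. 0) d"
  by (simp add: sat_chain_def saturated_chain_def)

lemma saturated_chain_Cons:
  assumes "saturated_chain S n s b c" "a \<in> S" "a < b" "\<not> (\<exists>t\<in>S. a < t \<and> t < b)"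
  shows "saturated_chain S (Suc n) (\<lambda>i. if i = 0 then a else s (i - 1)) a c"
  unfolding saturated_chain_def
proof (intro conjI allI impI)
  fix i assume "i \<le> Suc n"
  then show "(if i = 0 then a else s (i - 1)) \<in> S"
    using assms(1,2) by (auto simp: saturated_chain_def)
next
  fix i assume "i < Suc n"
  then show "(if i = 0 then a else s (i - 1)) < (if Suc i = 0 then a else s (Suc i - 1))"
    and "\<not> (\<exists>t\<in>S. (if i = 0 then a else s (i - 1)) < t \<and> t < (if Suc i = 0 then a else s (Suc i - 1)))"
    using assms by (auto simp: saturated_chain_def less_Suc_eq_0_disj)
qed (use assms(1) in \<open>auto simp: saturated_chain_def\<close>)

lemma saturated_chain_graded_length:
  fixes rk :: "'a::order \<Rightarrow> nat"
  assumes cover: "\<And>x y. x \<in> S \<Longrightarrow> y \<in> S \<Longrightarrow> x < y \<Longrightarrow> \<exists>z\<in>S. x < z \<and> z \<le> y \<and> rk z = Suc (rk x)"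
    and s: "saturated_chain S n s a b"
  shows "rk b = rk a + n"
proof -
  have step: "rk (s (Suc i)) = Suc (rk (s i))" if "i < n" for i
  proof -
    have "s i \<in> S" "s (Suc i) \<in> S" "s i < s (Suc i)"
      and sat: "\<not> (\<exists>t\<in>S. s i < t \<and> t < s (Suc i))"
      using s that by (auto simp: saturated_chain_def)
    then obtain z where z: "z \<in> S" "s i < z" "z \<le> s (Suc i)" "rk z = Suc (rk (s i))"
      using cover by blast
    with sat have "z = s (Suc i)" by (auto simp: order.strict_iff_order)
    with z show ?thesis by simp
  qed
  have "i \<le> n \<Longrightarrow> rk (s i) = rk a + i" for i
    by (induction i) (use s step in \<open>auto simp: saturated_chain_def\<close>)
  from this[of n] show ?thesis using s by (simp add: saturated_chain_def)
qed

lemma saturated_chain_graded_exists: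
  fixes rk :: "'a::order \<Rightarrow> nat"
  assumes rk_mono: "\<And>x y. x \<in> S \<Longrightarrow> y \<in> S \<Longrightarrow> x < y \<Longrightarrow> rk x < rk y"
    and cover: "\<And>x y. x \<in> S \<Longrightarrow> y \<in> S \<Longrightarrow> x < y \<Longrightarrow> \<exists>z\<in>S. x < z \<and> z \<le> y \<and> rk z = Suc (rk x)"
    and "a \<in> S" "b \<in> S" "a \<le> b" "rk b = rk a + n"
  shows "\<exists>s. saturated_chain S n s a b"
  using assms(3,5,6)
proof (induction n arbitrary: a)
  case 0
  with rk_mono[of a b] assms(4) have "a = b" by (auto simp: order.strict_iff_order)
  then show ?case using assms(4) by (intro exI[of _ "\<lambda>_. b"]) (simp add: saturated_chain_def)
next
  case (Suc n)
  then have "a \<noteq> b" by auto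
  with Suc.prems(2) have "a < b" by (simp add: order.strict_iff_order)
  then obtain z where z: "z \<in> S" "a < z" "z \<le> b" "rk z = Suc (rk a)"
    using cover Suc.prems(1) assms(4) by blast
  then obtain s where "saturated_chain S n s z b" using Suc.IH[of z] Suc.prems(3) by auto
  moreover have "\<not> (\<exists>t\<in>S. a < t \<and> t < z)"
  proof
    assume "\<exists>t\<in>S. a < t \<and> t < z"
    then obtain t where "t \<in> S" "rk a < rk t" "rk t < rk z"
      using rk_mono Suc.prems(1) z(1) by blast
    with z(4) show False by simp
  qed
  ultimately show ?case using saturated_chain_Cons Suc.prems(1) z(2) by blast
qed

lemma saturated_chain_graded_iff:
  fixes rk :: "'a::order \<Rightarrow> nat"
  assumes rk_mono: "\<And>x y. x \<in> S \<Longrightarrow> y \<in> S \<Longrightarrow> x < y \<Longrightarrow> rk x < rk y"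
    and cover: "\<And>x y. x \<in> S \<Longrightarrow> y \<in> S \<Longrightarrow> x < y \<Longrightarrow> \<exists>z\<in>S. x < z \<and> z \<le> y \<and> rk z = Suc (rk x)"
    and "a \<in> S" "b \<in> S" "a \<le> b"
  shows "(\<exists>s. saturated_chain S n s a b) \<longleftrightarrow> n = rk b - rk a"
proof -
  have "rk a \<le> rk b"
    using assms(3-5) rk_mono[of a b] by (cases "a = b") (auto simp: order.strict_iff_order)
  show ?thesis
  proof
    assume "\<exists>s. saturated_chain S n s a b"
    then have "rk b = rk a + n" using saturated_chain_graded_length[OF cover] by blast
    then show "n = rk b - rk a" by simp
  next
    assume "n = rk b - rk a"
    with \<open>rk a \<le> rk b\<close> have "rk b = rk a + n" by simp
    then show "\<exists>s. saturated_chain S n s a b" using saturated_chain_graded_exists[OF assms] by blast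
  qed
qed

lemma saturated_chain_map:
  assumes less: "\<And>x y. x \<in> E \<Longrightarrow> y \<in> E \<Longrightarrow> f x < f y \<longleftrightarrow> x < y"
    and t: "saturated_chain E n t a b"
  shows "saturated_chain (f ` E) n (f \<circ> t) (f a) (f b)"
  unfolding saturated_chain_def
proof (intro conjI allI impI)
  fix i assume "i < n"
  then have ti: "t i \<in> E" "t (Suc i) \<in> E" "t i < t (Suc i)"
    and sat: "\<not> (\<exists>u\<in>E. t i < u \<and> u < t (Suc i))"
    using t by (auto simp: saturated_chain_def)
  then show "(f \<circ> t) i < (f \<circ> t) (Suc i)" using less by simp
  show "\<not> (\<exists>v\<in>f ` E. (f \<circ> t) i < v \<and> v < (f \<circ> t) (Suc i))"
    using less ti sat by (auto simp only: comp_apply image_iff)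
qed (use t in \<open>auto simp: saturated_chain_def\<close>)

lemma saturated_chain_image_iff:
  assumes emb: "\<And>x y. x \<in> E \<Longrightarrow> y \<in> E \<Longrightarrow> f x \<le> f y \<longleftrightarrow> x \<le> y" and "a \<in> E" "b \<in> E"
  shows "(\<exists>s. saturated_chain (f ` E) n s (f a) (f b)) \<longleftrightarrow> (\<exists>t. saturated_chain E n t a b)"
proof
  have less: "f x < f y \<longleftrightarrow> x < y" if "x \<in> E" "y \<in> E" for x y
    using emb[OF that] emb[OF that(2,1)] by (auto simp: less_le_not_le)
  have inj: "x = y" if "x \<in> E" "y \<in> E" "f x = f y" for x y
    using emb[OF that(1,2)] emb[OF that(2,1)] that(3) by (simp add: order.antisym)
  assume "\<exists>s. saturated_chain (f ` E) n s (f a) (f b)"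
  then obtain s where s: "saturated_chain (f ` E) n s (f a) (f b)" ..
  define t where "t i = inv_into E f (s i)" for i
  have t: "t i \<in> E" "f (t i) = s i" if "i \<le> n" for i
    using s that by (auto simp: saturated_chain_def t_def inv_into_into f_inv_into_f)
  have "saturated_chain E n t a b"
    unfolding saturated_chain_def
  proof (intro conjI allI impI)
    show "t 0 = a" "t n = b"
      using t[of 0] t[of n] s assms(2,3) inj by (auto simp: saturated_chain_def)
  next
    fix i assume "i < n"
    then have "t i \<in> E" "t (Suc i) \<in> E" "f (t i) = s i" "f (t (Suc i)) = s (Suc i)"
      using t by auto
    moreover have "s i < s (Suc i)" "\<not> (\<exists>v\<in>f ` E. s i < v \<and> v < s (Suc i))"
      using s \<open>i < n\<close> by (auto simp: saturated_chain_def)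
    ultimately show "t i < t (Suc i)" "\<not> (\<exists>u\<in>E. t i < u \<and> u < t (Suc i))"
      using less by (metis, metis image_eqI)
  qed (use t in blast)
  then show "\<exists>t. saturated_chain E n t a b" by blast
next
  assume "\<exists>t. saturated_chain E n t a b"
  moreover have "f x < f y \<longleftrightarrow> x < y" if "x \<in> E" "y \<in> E" for x y
    using emb[OF that] emb[OF that(2,1)] by (auto simp: less_le_not_le)
  ultimately show "\<exists>s. saturated_chain (f ` E) n s (f a) (f b)"
    using saturated_chain_map by blast
qed

definition ms_sum :: "(nat \<Rightarrow> nat) \<Rightarrow> nat \<Rightarrow> nat" where
  "ms_sum m x = (\<Sum>i=1..x. m i)"

lemma multiplicity_sequence_pos: "multiplicity_sequence m \<Longrightarrow> 1 \<le> n \<Longrightarrow> 0 < m n"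
  by (simp add: multiplicity_sequence_def)

lemma multiplicity_sequence_length:
  assumes "multiplicity_sequence m"
  shows "\<forall>n>ms_length m. m n = 1" and "1 \<le> ms_length m \<Longrightarrow> 2 \<le> m (ms_length m)"
proof -
  have "(\<forall>n>ms_length m. m n = 1) \<and> (1 \<le> ms_length m \<longrightarrow> 2 \<le> m (ms_length m))"
  proof (cases "\<forall>n\<ge>1. m n = 1")
    case False
    define P where "P n \<longleftrightarrow> n \<ge> 1 \<and> m n \<noteq> 1" for n
    obtain k where "P k" using False by (auto simp: P_def)
    obtain N where "\<forall>n\<ge>N. m n = 1"
      using assms by (auto simp: multiplicity_sequence_def)
    then have bound: "P n \<Longrightarrow> n \<le> N" for n by (metis P_def nat_le_linear)
    have len: "ms_length m = Greatest P"
      unfolding ms_length_def P_def by (rule if_not_P[OF False])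
    have "P (Greatest P)" using GreatestI_nat[of P k N] \<open>P k\<close> bound by blast
    moreover have "m n = 1" if "Greatest P < n" for n
      using Greatest_le_nat[of P n N] bound that by (force simp: P_def)
    ultimately show ?thesis
      using len multiplicity_sequence_pos[OF assms, of "Greatest P"] by (simp add: P_def)
  qed (simp add: ms_length_def)
  then show "\<forall>n>ms_length m. m n = 1" and "1 \<le> ms_length m \<Longrightarrow> 2 \<le> m (ms_length m)"
    by blast+
qed

lemma ms_sum_Suc: "ms_sum m (Suc x) = ms_sum m x + m (Suc x)"
  by (simp add: ms_sum_def)

lemma strict_mono_ms_sum: "multiplicity_sequence m \<Longrightarrow> strict_mono (ms_sum m)"
  unfolding strict_mono_Suc_iff by (simp add: ms_sum_Suc multiplicity_sequence_pos)

lemma ms_sum_ge: "multiplicity_sequence m \<Longrightarrow> x \<le> ms_sum m x"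
  by (simp add: strict_mono_imp_increasing strict_mono_ms_sum)

lemma ms_sum_beyond_length:
  assumes "multiplicity_sequence m" "ms_length m \<le> x"
  shows "ms_sum m (x + t) = ms_sum m x + t"
proof (induction t)
  case (Suc t)
  then show ?case
    using multiplicity_sequence_length(1)[OF assms(1)] assms(2) by (simp add: ms_sum_Suc)
qed simp

lemma ns_genus_AS:
  assumes ms: "multiplicity_sequence m"
  shows "ns_genus (AS m) = ms_sum m (ms_length m) - ms_length m"
proof -
  define l where "l = ms_length m"
  have "UNIV - AS m = {..<ms_sum m l} - ms_sum m ` {..<l}"
    by (auto simp: AS_def ms_sum_def l_def le_less)
  moreover have "ms_sum m ` {..<l} \<subseteq> {..<ms_sum m l}"
    using strict_mono_ms_sum[OF ms] by (auto dest: strict_monoD)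
  moreover have "card (ms_sum m ` {..<l}) = l"
    using strict_mono_ms_sum[OF ms] by (simp add: card_image strict_mono_imp_inj_on)
  ultimately show ?thesis unfolding ns_genus_def l_def[symmetric] by (simp add: card_Diff_subset)
qed

text \<open>Branches \<open>i\<close> and \<open>h\<close> pass through a common node at level \<open>j\<close>, i.e. \<open>j \<le> p\<^sub>i\<^sub>,\<^sub>h\<close>; for an
  untwisted tree \<open>p\<^sub>i\<^sub>,\<^sub>h\<close> is the minimum of the \<open>p k\<close> between the two branches.\<close>

definition glued :: "(nat \<Rightarrow> nat) \<Rightarrow> nat \<Rightarrow> nat \<Rightarrow> nat \<Rightarrow> bool" where
  "glued p j i h \<longleftrightarrow> (\<forall>k. min i h \<le> k \<and> k < max i h \<longrightarrow> j \<le> p k)"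

lemma glued_refl [simp]: "glued p j i i"
  by (simp add: glued_def)

lemma glued_sym: "glued p j i h \<Longrightarrow> glued p j h i"
  by (simp add: glued_def min.commute max.commute)

lemma glued_trans: "glued p j i h \<Longrightarrow> glued p j h g \<Longrightarrow> glued p j i g"
  unfolding glued_def
proof (intro allI impI)
  fix k
  assume ih: "\<forall>k. min i h \<le> k \<and> k < max i h \<longrightarrow> j \<le> p k"
    and hg: "\<forall>k. min h g \<le> k \<and> k < max h g \<longrightarrow> j \<le> p k"
    and k: "min i g \<le> k \<and> k < max i g"
  then have "(min i h \<le> k \<and> k < max i h) \<or> (min h g \<le> k \<and> k < max h g)"
    by (auto simp: min_def max_def split: if_splits)
  then show "j \<le> p k" using ih hg by blast
qed

lemma glued_Suc_iff: "glued p j k (Suc k) \<longleftrightarrow> j \<le> p k"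
  by (auto simp: glued_def less_Suc_eq_le)

lemma glued_Suc_right: "glued p j i (Suc h) \<Longrightarrow> i \<le> h \<Longrightarrow> glued p j i h \<and> j \<le> p h"
  by (auto simp: glued_def)

lemma glued_level_1: "\<forall>k. k + 1 < r \<longrightarrow> p k \<ge> 1 \<Longrightarrow> i < r \<Longrightarrow> h < r \<Longrightarrow> glued p 1 i h"
  by (auto simp: glued_def)

lemma on_branch_iff_glued: "on_branch r p i j h \<longleftrightarrow> h < r \<and> glued p j i h"
proof (cases "h = i")
  case False
  then have "{min i h..<max i h} \<noteq> {}" by (simp add: min_def max_def)
  then have "j \<le> glue p i h \<longleftrightarrow> (\<forall>k\<in>{min i h..<max i h}. j \<le> p k)"
    by (simp add: glue_def)
  then show ?thesis using False by (auto simp: on_branch_def glued_def)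
qed (simp add: on_branch_def)

lemma node_eq_glued: "node r p i j = (j, {h. h < r \<and> glued p j i h})"
  by (simp add: node_def on_branch_iff_glued)

lemma node_eq_iff:
  assumes "i < r" "i' < r"
  shows "node r p i j = node r p i' j' \<longleftrightarrow> j = j' \<and> glued p j i i'"
proof
  assume eq: "node r p i j = node r p i' j'"
  then have "j = j'" by (simp add: node_eq_glued)
  moreover have "i' \<in> snd (node r p i j)"
    unfolding eq using assms(2) by (simp add: node_eq_glued)
  ultimately show "j = j' \<and> glued p j i i'" by (simp add: node_eq_glued)
next
  assume "j = j' \<and> glued p j i i'"
  then show "node r p i j = node r p i' j'"
    by (auto simp: node_eq_glued intro: glued_trans glued_sym)
qed

definition levels_compatible :: "nat \<Rightarrow> (nat \<Rightarrow> nat) \<Rightarrow> (nat \<Rightarrow> nat) \<Rightarrow> bool" where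
  "levels_compatible r p e \<longleftrightarrow> (\<forall>k. Suc k < r \<longrightarrow> min (e k) (p k) = min (e (Suc k)) (p k))"

text \<open>\<open>e h\<close> is the depth of a rooted subtree on branch \<open>h\<close>. Branches \<open>k\<close> and \<open>k + 1\<close> share their
  first \<open>p k\<close> nodes, hence must reach the same depth up to \<open>p k\<close>. The zero vector stands for the
  element \<open>0\<close>, which comes from no rooted subtree.\<close>

definition level_vecs :: "nat \<Rightarrow> (nat \<Rightarrow> nat) \<Rightarrow> (nat \<Rightarrow> nat) set" where
  "level_vecs r p =
     {e \<in> vecs r. (e = (\<lambda>_. 0) \<or> (\<forall>i<r. 1 \<le> e i)) \<and> levels_compatible r p e}"

definition level_subtree :: "nat \<Rightarrow> (nat \<Rightarrow> nat) \<Rightarrow> (nat \<Rightarrow> nat) \<Rightarrow> (nat \<times> nat set) set" where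
  "level_subtree r p e = (\<lambda>(i, j). node r p i j) ` (SIGMA i:{..<r}. {1..e i})"

definition tree_elem :: "nat \<Rightarrow> (nat \<Rightarrow> nat \<Rightarrow> nat) \<Rightarrow> (nat \<Rightarrow> nat) \<Rightarrow> (nat \<Rightarrow> nat)" where
  "tree_elem r M e = (\<lambda>h. if h < r then ms_sum (M h) (e h) else 0)"

lemma level_vecs_vecs: "e \<in> level_vecs r p \<Longrightarrow> e \<in> vecs r"
  by (simp add: level_vecs_def)

lemma vecs_less_obtain:
  assumes "e \<in> vecs r" "f \<in> vecs r" "e < f"
  obtains i where "i < r" "e i < f i"
proof -
  have "e \<le> f" "e \<noteq> f" using assms(3) by (simp_all add: less_le)
  then obtain i where "e i \<noteq> f i" "e i \<le> f i" by (auto simp: fun_eq_iff le_fun_def)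
  moreover have "i < r"
  proof (rule ccontr)
    assume "\<not> i < r"
    then have "e i = 0" "f i = 0" using assms(1,2) by (auto simp: vecs_def)
    with \<open>e i \<noteq> f i\<close> show False by simp
  qed
  ultimately show thesis using that by simp
qed

lemma zero_in_level_vecs: "(\<lambda>_. 0) \<in> level_vecs r p"
  by (simp add: level_vecs_def vecs_def levels_compatible_def)

lemma glued_le_level_iff:
  assumes "levels_compatible r p e" "i < r" "h < r" "glued p j i h"
  shows "j \<le> e i \<longleftrightarrow> j \<le> e h"
proof -
  have "j \<le> e i \<longleftrightarrow> j \<le> e h" if "i \<le> h" "h < r" "glued p j i h" for i h
    using that
  proof (induction h rule: dec_induct)
    case (step h)
    then have "glued p j i h" "j \<le> p h" using glued_Suc_right by blast+
    moreover have "min (e h) (p h) = min (e (Suc h)) (p h)"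
      using assms(1) step.prems by (simp add: levels_compatible_def)
    ultimately show ?case using step by (metis Suc_lessD min.bounded_iff)
  qed simp
  then show ?thesis using assms(2-4) glued_sym by (metis nat_le_linear)
qed

lemma mem_level_subtree:
  "nd \<in> level_subtree r p e \<longleftrightarrow> (\<exists>i j. i < r \<and> 1 \<le> j \<and> j \<le> e i \<and> nd = node r p i j)"
  unfolding level_subtree_def by force

lemma finite_level_subtree: "finite (level_subtree r p e)"
  by (simp add: level_subtree_def)

lemma node_in_level_subtree_iff:
  assumes "levels_compatible r p e" "i < r" "1 \<le> j"
  shows "node r p i j \<in> level_subtree r p e \<longleftrightarrow> j \<le> e i"
proof
  assume "node r p i j \<in> level_subtree r p e"
  then obtain i' j' where "i' < r" "j' \<le> e i'" "node r p i j = node r p i' j'"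
    by (auto simp: mem_level_subtree)
  then show "j \<le> e i"
    using assms node_eq_iff glued_le_level_iff glued_sym by metis
qed (use assms in \<open>auto simp: mem_level_subtree\<close>)

lemma level_subtree_zero [simp]: "level_subtree r p (\<lambda>_. 0) = {}"
  by (auto simp: mem_level_subtree)

lemma level_subtree_mono_iff:
  assumes "e \<in> level_vecs r p" "f \<in> level_vecs r p"
  shows "level_subtree r p e \<subseteq> level_subtree r p f \<longleftrightarrow> e \<le> f"
proof
  assume sub: "level_subtree r p e \<subseteq> level_subtree r p f"
  have "e h \<le> f h" for h
  proof (cases "h < r \<and> 1 \<le> e h")
    case True
    have "levels_compatible r p e" "levels_compatible r p f"
      using assms by (simp_all add: level_vecs_def)
    then show ?thesis
      using sub True node_in_level_subtree_iff[of r p e h "e h"] node_in_level_subtree_iff[of r p f h "e h"]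
      by blast
  next
    case False
    then show ?thesis using assms(1) by (auto simp: level_vecs_def vecs_def)
  qed
  then show "e \<le> f" by (simp add: le_fun_def)
next
  assume "e \<le> f"
  then show "level_subtree r p e \<subseteq> level_subtree r p f"
    unfolding level_subtree_def by (intro image_mono Sigma_mono) (auto simp: le_fun_def)
qed

lemma card_level_subtree_strict_mono:
  assumes "e \<in> level_vecs r p" "f \<in> level_vecs r p" "e < f"
  shows "card (level_subtree r p e) < card (level_subtree r p f)"
proof -
  have "level_subtree r p e \<subseteq> level_subtree r p f" "\<not> level_subtree r p f \<subseteq> level_subtree r p e"
    using assms(3) level_subtree_mono_iff[OF assms(1,2)] level_subtree_mono_iff[OF assms(2,1)]
    by (simp_all add: less_le_not_le)
  then have "level_subtree r p e \<subset> level_subtree r p f" by blast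
  then show ?thesis by (simp add: finite_level_subtree psubset_card_mono)
qed

lemma sum_node_vec_level_subtree:
  assumes "levels_compatible r p e"
  shows "(\<lambda>h. \<Sum>nd\<in>level_subtree r p e. node_vec M nd h) = tree_elem r M e"
proof
  fix h
  show "(\<Sum>nd\<in>level_subtree r p e. node_vec M nd h) = tree_elem r M e h"
  proof (cases "h < r")
    case False
    then have "\<forall>nd\<in>level_subtree r p e. node_vec M nd h = 0"
      by (auto simp: mem_level_subtree node_vec_def node_eq_glued)
    then show ?thesis using False by (simp add: tree_elem_def)
  next
    case True
    have branch: "{nd \<in> level_subtree r p e. h \<in> snd nd} = (\<lambda>j. node r p h j) ` {1..e h}"
    proof (rule set_eqI, rule iffI)
      fix nd assume "nd \<in> {nd \<in> level_subtree r p e. h \<in> snd nd}"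
      then obtain i j where ij: "i < r" "1 \<le> j" "j \<le> e i" "nd = node r p i j" "h \<in> snd nd"
        by (auto simp: mem_level_subtree)
      then have "glued p j i h" by (simp add: node_eq_glued)
      then have "nd = node r p h j" "j \<le> e h"
        using ij True node_eq_iff glued_le_level_iff[OF assms] by blast+
      then show "nd \<in> (\<lambda>j. node r p h j) ` {1..e h}" using ij by auto
    next
      fix nd assume "nd \<in> (\<lambda>j. node r p h j) ` {1..e h}"
      then show "nd \<in> {nd \<in> level_subtree r p e. h \<in> snd nd}"
        using True by (auto simp: mem_level_subtree node_eq_glued)
    qed
    have "(\<Sum>nd\<in>level_subtree r p e. node_vec M nd h)
        = (\<Sum>nd\<in>{nd \<in> level_subtree r p e. h \<in> snd nd}. M h (fst nd))"
      by (simp add: node_vec_def sum.inter_filter[OF finite_level_subtree, symmetric])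
    also have "\<dots> = (\<Sum>j=1..e h. M h j)"
      unfolding branch by (subst sum.reindex) (auto intro: inj_onI simp: node_def)
    finally show ?thesis using True by (simp add: tree_elem_def ms_sum_def)
  qed
qed

lemma tree_elem_le_iff:
  assumes "\<forall>k<r. multiplicity_sequence (M k)" "e \<in> vecs r" "f \<in> vecs r"
  shows "tree_elem r M e \<le> tree_elem r M f \<longleftrightarrow> e \<le> f"
proof -
  have "ms_sum (M h) (e h) \<le> ms_sum (M h) (f h) \<longleftrightarrow> e h \<le> f h" if "h < r" for h
    using assms(1) that strict_mono_ms_sum strict_mono_less_eq by blast
  moreover have "e h \<le> f h" if "\<not> h < r" for h
    using assms(2) that by (simp add: vecs_def)
  ultimately show ?thesis by (auto simp: le_fun_def tree_elem_def)
qed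

lemma tree_elem_zero [simp]: "tree_elem r M (\<lambda>_. 0) = (\<lambda>_. 0)"
  by (simp add: tree_elem_def ms_sum_def fun_eq_iff)

lemma rooted_subtree_level_subtree:
  assumes "r \<ge> 1" "e \<in> level_vecs r p" "e \<noteq> (\<lambda>_. 0)"
  shows "rooted_subtree r p (level_subtree r p e)"
proof -
  have compat: "levels_compatible r p e" and pos: "\<forall>i<r. 1 \<le> e i"
    using assms(2,3) by (auto simp: level_vecs_def)
  have "level_subtree r p e \<subseteq> tree_nodes r p"
    unfolding tree_nodes_def by (auto simp: mem_level_subtree) blast
  moreover have "node r p 0 1 \<in> level_subtree r p e"
    using node_in_level_subtree_iff[OF compat] pos assms(1) by simp
  moreover have "node r p i j \<in> level_subtree r p e"
    if "i < r" "1 \<le> j" "node r p i (Suc j) \<in> level_subtree r p e" for i j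
    using that node_in_level_subtree_iff[OF compat] by simp
  ultimately show ?thesis by (simp add: rooted_subtree_def finite_level_subtree)
qed

lemma rooted_subtree_down_closed:
  assumes "rooted_subtree r p N" "h < r" "1 \<le> j" "j \<le> j'" "node r p h j' \<in> N"
  shows "node r p h j \<in> N"
  using assms(4,5)
proof (induction j' rule: dec_induct)
  case (step j')
  have "\<forall>i<r. \<forall>j\<ge>1. node r p i (Suc j) \<in> N \<longrightarrow> node r p i j \<in> N"
    using assms(1) unfolding rooted_subtree_def by blast
  then show ?case using step assms(2,3) le_trans by blast
qed

lemma min_eq_if_le_iff:
  fixes a b c :: nat
  assumes "\<And>m. 1 \<le> m \<Longrightarrow> m \<le> c \<Longrightarrow> m \<le> a \<longleftrightarrow> m \<le> b" "1 \<le> a" "1 \<le> b"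
  shows "min a c = min b c"
proof (cases "c = 0")
  case False
  then show ?thesis
    using assms(1)[of "min a c"] assms(1)[of "min b c"] assms(2,3) by linarith
qed simp

lemma levels_compatible_if_node_set:
  assumes pos: "\<And>h. h < r \<Longrightarrow> 1 \<le> e h"
    and mem_iff: "\<And>h j. h < r \<Longrightarrow> 1 \<le> j \<Longrightarrow> node r p h j \<in> N \<longleftrightarrow> j \<le> e h"
  shows "levels_compatible r p e"
  unfolding levels_compatible_def
proof (intro allI impI)
  fix k assume k: "Suc k < r"
  then have "k < r" by simp
  have "m \<le> e k \<longleftrightarrow> m \<le> e (Suc k)" if "1 \<le> m" "m \<le> p k" for m
  proof -
    have "node r p k m = node r p (Suc k) m"
      using node_eq_iff[of k r "Suc k" p m m] k that by (simp add: glued_Suc_iff)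
    then show ?thesis using mem_iff[OF \<open>k < r\<close> that(1)] mem_iff[OF k that(1)] by simp
  qed
  then show "min (e k) (p k) = min (e (Suc k)) (p k)"
    using pos k \<open>k < r\<close> by (intro min_eq_if_le_iff)
qed

definition subtree_depth :: "nat \<Rightarrow> (nat \<Rightarrow> nat) \<Rightarrow> (nat \<times> nat set) set \<Rightarrow> nat \<Rightarrow> nat" where
  "subtree_depth r p N h = (if h < r then Max {j. node r p h j \<in> N} else 0)"

lemma rooted_subtree_depth:
  assumes "r \<ge> 1" "\<forall>k. k + 1 < r \<longrightarrow> p k \<ge> 1" "rooted_subtree r p N" "h < r"
  shows "1 \<le> subtree_depth r p N h"
    and "1 \<le> j \<Longrightarrow> node r p h j \<in> N \<longleftrightarrow> j \<le> subtree_depth r p N h"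
proof -
  define A where "A = {j. node r p h j \<in> N}"
  have N: "finite N" "node r p 0 1 \<in> N"
    using assms(3) unfolding rooted_subtree_def by blast+
  have "A \<subseteq> fst ` N" unfolding A_def by (force simp: node_def)
  then have fin: "finite A" using N(1) finite_subset by blast
  have "node r p h 1 = node r p 0 1"
    using node_eq_iff[of h r 0] glued_level_1[OF assms(2)] assms(1,4) by auto
  then have "1 \<in> A" using N(2) by (simp add: A_def)
  then show "1 \<le> subtree_depth r p N h"
    using fin assms(4) unfolding subtree_depth_def A_def[symmetric] by simp
  assume "1 \<le> j"
  show "node r p h j \<in> N \<longleftrightarrow> j \<le> subtree_depth r p N h"
  proof
    assume "j \<le> subtree_depth r p N h"
    moreover have "node r p h (subtree_depth r p N h) \<in> N"
      using fin \<open>1 \<in> A\<close> assms(4) Max_in[of A] by (auto simp: subtree_depth_def A_def)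
    ultimately show "node r p h j \<in> N"
      using rooted_subtree_down_closed[OF assms(3,4) \<open>1 \<le> j\<close>] by blast
  next
    assume "node r p h j \<in> N"
    then have "j \<in> A" by (simp add: A_def)
    then show "j \<le> subtree_depth r p N h"
      using fin assms(4) unfolding subtree_depth_def A_def[symmetric] by simp
  qed
qed

lemma rooted_subtree_eq_level_subtree:
  assumes "r \<ge> 1" "\<forall>k. k + 1 < r \<longrightarrow> p k \<ge> 1" "rooted_subtree r p N"
  obtains e where "e \<in> level_vecs r p" "N = level_subtree r p e"
proof -
  define e where "e = subtree_depth r p N"
  note depth = rooted_subtree_depth[OF assms, folded e_def]
  have "levels_compatible r p e"
    using depth by (rule levels_compatible_if_node_set)
  then have "e \<in> level_vecs r p"
    using depth(1) by (auto simp: level_vecs_def vecs_def e_def subtree_depth_def)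
  moreover have "N = level_subtree r p e"
  proof
    show "N \<subseteq> level_subtree r p e"
    proof
      fix nd assume "nd \<in> N"
      moreover have "N \<subseteq> tree_nodes r p" using assms(3) unfolding rooted_subtree_def by blast
      ultimately obtain i j where "i < r" "1 \<le> j" "nd = node r p i j"
        by (auto simp: tree_nodes_def)
      then show "nd \<in> level_subtree r p e"
        using depth(2) \<open>nd \<in> N\<close> by (auto simp: mem_level_subtree)
    qed
  qed (use depth(2) in \<open>auto simp: mem_level_subtree\<close>)
  ultimately show thesis using that by blast
qed

lemma tree_semigroup_eq_image:
  assumes "r \<ge> 1" "\<forall>k. k + 1 < r \<longrightarrow> p k \<ge> 1"
  shows "tree_semigroup r M p = tree_elem r M ` level_vecs r p"
proof (intro equalityI subsetI)
  fix x assume "x \<in> tree_semigroup r M p"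
  then consider "x = (\<lambda>_. 0)"
    | N where "rooted_subtree r p N" "x = (\<lambda>h. \<Sum>nd\<in>N. node_vec M nd h)"
    unfolding tree_semigroup_def by blast
  then show "x \<in> tree_elem r M ` level_vecs r p"
  proof cases
    case 1
    then show ?thesis using zero_in_level_vecs tree_elem_zero by (metis image_eqI)
  next
    case 2
    then obtain e where "e \<in> level_vecs r p" "N = level_subtree r p e"
      using rooted_subtree_eq_level_subtree assms by blast
    then show ?thesis
      using 2 sum_node_vec_level_subtree by (auto simp: level_vecs_def)
  qed
next
  fix x assume "x \<in> tree_elem r M ` level_vecs r p"
  then obtain e where e: "e \<in> level_vecs r p" "x = tree_elem r M e" by blast
  show "x \<in> tree_semigroup r M p"
  proof (cases "e = (\<lambda>_. 0)")
    case True
    then show ?thesis using e by (simp add: tree_semigroup_def)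
  next
    case False
    then have "rooted_subtree r p (level_subtree r p e)"
      using rooted_subtree_level_subtree assms(1) e(1) by blast
    then show ?thesis
      using e sum_node_vec_level_subtree[of r p e M] unfolding tree_semigroup_def
      by (auto simp: level_vecs_def)
  qed
qed

definition add_node :: "nat \<Rightarrow> (nat \<Rightarrow> nat) \<Rightarrow> nat \<Rightarrow> nat \<Rightarrow> (nat \<Rightarrow> nat) \<Rightarrow> (nat \<Rightarrow> nat)" where
  "add_node r p i j e = (\<lambda>h. if h < r \<and> glued p j i h then j else e h)"

lemma le_add_node:
  assumes "\<And>h. h < r \<Longrightarrow> glued p j i h \<Longrightarrow> e h = j - 1"
  shows "e \<le> add_node r p i j e"
  using assms by (simp add: add_node_def le_fun_def)

lemma add_node_in_level_vecs:
  assumes hp: "\<forall>k. k + 1 < r \<longrightarrow> p k \<ge> 1" and e: "e \<in> level_vecs r p" and "i < r"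
    and leaf: "\<And>h. h < r \<Longrightarrow> glued p j i h \<Longrightarrow> e h = j - 1"
    and root: "e = (\<lambda>_. 0) \<Longrightarrow> j = 1"
  shows "add_node r p i j e \<in> level_vecs r p"
proof -
  have "levels_compatible r p (add_node r p i j e)"
    unfolding levels_compatible_def
  proof (intro allI impI)
    fix k assume k: "Suc k < r"
    have ek: "min (e k) (p k) = min (e (Suc k)) (p k)"
      using e k by (simp add: level_vecs_def levels_compatible_def)
    show "min (add_node r p i j e k) (p k) = min (add_node r p i j e (Suc k)) (p k)"
    proof (cases "glued p j i k \<longleftrightarrow> glued p j i (Suc k)")
      case True
      then show ?thesis using ek k by (simp add: add_node_def)
    next
      case False
      have "\<not> j \<le> p k"
      proof
        assume "j \<le> p k"
        then have "glued p j k (Suc k)" by (simp add: glued_Suc_iff)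
        then show False
          using False glued_trans[of p j i k "Suc k"] glued_trans[of p j i "Suc k" k] glued_sym
          by blast
      qed
      then show ?thesis
        using False ek k leaf[of k] leaf[of "Suc k"] by (auto simp: add_node_def)
    qed
  qed
  moreover have "add_node r p i j e = (\<lambda>_. 0) \<or> (\<forall>h<r. 1 \<le> add_node r p i j e h)"
  proof (cases "e = (\<lambda>_. 0)")
    case True
    then show ?thesis using root glued_level_1[OF hp \<open>i < r\<close>] by (simp add: add_node_def)
  next
    case False
    then have "\<forall>h<r. 1 \<le> e h" using e by (simp add: level_vecs_def)
    then show ?thesis using le_add_node[of r p j i e, OF leaf] by (auto simp: le_fun_def intro: order_trans)
  qed
  moreover have "add_node r p i j e \<in> vecs r"
    using e by (simp add: add_node_def level_vecs_def vecs_def)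
  ultimately show ?thesis by (simp add: level_vecs_def)
qed

lemma card_level_subtree_add_node:
  assumes e: "e \<in> level_vecs r p" and g: "add_node r p i j e \<in> level_vecs r p"
    and "i < r" "1 \<le> j" and leaf: "\<And>h. h < r \<Longrightarrow> glued p j i h \<Longrightarrow> e h = j - 1"
  shows "card (level_subtree r p (add_node r p i j e)) = Suc (card (level_subtree r p e))"
proof -
  have e_compat: "levels_compatible r p e" using e by (simp add: level_vecs_def)
  have "level_subtree r p (add_node r p i j e) \<subseteq> insert (node r p i j) (level_subtree r p e)"
  proof
    fix nd assume "nd \<in> level_subtree r p (add_node r p i j e)"
    then obtain h j' where h: "h < r" "1 \<le> j'" "j' \<le> add_node r p i j e h" "nd = node r p h j'"
      by (auto simp: mem_level_subtree)
    show "nd \<in> insert (node r p i j) (level_subtree r p e)"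
    proof (cases "glued p j i h \<and> j' = j")
      case True
      then have "nd = node r p i j"
        using h node_eq_iff[OF h(1) \<open>i < r\<close>] glued_sym by blast
      then show ?thesis by simp
    next
      case False
      then have "j' \<le> e h" using h leaf by (auto simp: add_node_def split: if_splits)
      then show ?thesis using h by (auto simp: mem_level_subtree)
    qed
  qed
  moreover have "node r p i j \<in> level_subtree r p (add_node r p i j e)"
    using node_in_level_subtree_iff[OF _ \<open>i < r\<close> \<open>1 \<le> j\<close>] g \<open>i < r\<close>
    by (simp add: level_vecs_def add_node_def)
  moreover have "level_subtree r p e \<subseteq> level_subtree r p (add_node r p i j e)"
    using level_subtree_mono_iff[OF e g] le_add_node[of r p j i e, OF leaf] by simp
  moreover have "node r p i j \<notin> level_subtree r p e"
    using node_in_level_subtree_iff[OF e_compat \<open>i < r\<close> \<open>1 \<le> j\<close>] leaf[OF \<open>i < r\<close>] \<open>1 \<le> j\<close>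
    by simp
  ultimately have "level_subtree r p (add_node r p i j e) = insert (node r p i j) (level_subtree r p e)"
    by blast
  with \<open>node r p i j \<notin> level_subtree r p e\<close> show ?thesis by (simp add: finite_level_subtree)
qed

lemma level_vecs_cover:
  assumes hp: "\<forall>k. k + 1 < r \<longrightarrow> p k \<ge> 1"
    and e: "e \<in> level_vecs r p" and f: "f \<in> level_vecs r p" and "e < f"
  shows "\<exists>g\<in>level_vecs r p. e < g \<and> g \<le> f \<and>
           card (level_subtree r p g) = Suc (card (level_subtree r p e))"
proof -
  have e_compat: "levels_compatible r p e" and f_compat: "levels_compatible r p f"
    using e f by (simp_all add: level_vecs_def)
  obtain i0 where i0: "i0 < r" "e i0 < f i0"
    using vecs_less_obtain[OF level_vecs_vecs[OF e] level_vecs_vecs[OF f] \<open>e < f\<close>] .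
  text \<open>The new node sits at the lowest level where some branch of \<open>f\<close> outgrows \<open>e\<close>.\<close>
  define Q where "Q j \<longleftrightarrow> (\<exists>i<r. e i < j \<and> j \<le> f i)" for j
  define j where "j = (LEAST j. Q j)"
  have "Q j" unfolding j_def using i0 by (intro LeastI[of Q "Suc (e i0)"]) (auto simp: Q_def)
  then obtain i where i: "i < r" "e i < j" "j \<le> f i" by (auto simp: Q_def)
  have "1 \<le> j" using i by simp
  have f_ge: "j \<le> f h" if "h < r" "glued p j i h" for h
    using glued_le_level_iff[OF f_compat i(1) that] i(3) by simp
  have leaf: "e h = j - 1" if "h < r" "glued p j i h" for h
  proof -
    have "e h < j" using glued_le_level_iff[OF e_compat i(1) that] i(2) by simp
    moreover have "\<not> Q (j - 1)" using \<open>1 \<le> j\<close> not_less_Least[of "j - 1" Q] by (simp add: j_def)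
    then have "\<not> e h < j - 1" using f_ge[OF that] that(1) unfolding Q_def by auto
    ultimately show ?thesis by linarith
  qed
  have root: "j = 1" if "e = (\<lambda>_. 0)"
  proof -
    have "Q 1" using i0 that by (auto simp: Q_def)
    then show ?thesis using \<open>1 \<le> j\<close> Least_le[of Q 1] by (simp add: j_def)
  qed
  define g where "g = add_node r p i j e"
  have g: "g \<in> level_vecs r p"
    unfolding g_def using add_node_in_level_vecs[OF hp e i(1) leaf root] .
  have "g i = j" by (simp add: g_def add_node_def i(1))
  then have "e < g"
    using le_add_node[of r p j i e, OF leaf] i(2) unfolding g_def by (metis less_le_not_le le_funD not_le)
  moreover have "g \<le> f"
    using f_ge \<open>e < f\<close> by (auto simp: g_def add_node_def le_fun_def less_fun_def)
  moreover have "card (level_subtree r p g) = Suc (card (level_subtree r p e))"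
    unfolding g_def using card_level_subtree_add_node[OF e g[unfolded g_def] i(1) \<open>1 \<le> j\<close> leaf] .
  ultimately show ?thesis using g by blast
qed

lemma saturated_chain_length_tree_semigroup:
  assumes "r \<ge> 1" "\<forall>k<r. multiplicity_sequence (M k)" "\<forall>k. k + 1 < r \<longrightarrow> p k \<ge> 1"
    and L: "L \<in> level_vecs r p"
  shows "(SOME n. \<exists>s. sat_chain (tree_semigroup r M p) n s (tree_elem r M L))
           = card (level_subtree r p L)"
proof -
  have image: "(\<exists>s. sat_chain (tree_semigroup r M p) n s (tree_elem r M L))
      \<longleftrightarrow> (\<exists>t. saturated_chain (level_vecs r p) n t (\<lambda>_. 0) L)" for n
    unfolding tree_semigroup_eq_image[OF assms(1,3)] sat_chain_iff_saturated_chain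
    using saturated_chain_image_iff[of "level_vecs r p" "tree_elem r M" "\<lambda>_. 0" L n]
      tree_elem_le_iff[OF assms(2)] level_vecs_vecs zero_in_level_vecs L
    by simp
  have graded: "(\<exists>t. saturated_chain (level_vecs r p) n t (\<lambda>_. 0) L)
      \<longleftrightarrow> n = card (level_subtree r p L)" for n
    using saturated_chain_graded_iff[of "level_vecs r p" "\<lambda>e. card (level_subtree r p e)"]
      card_level_subtree_strict_mono level_vecs_cover[OF assms(3)] zero_in_level_vecs L
    by (simp add: le_fun_def)
  show ?thesis using image graded by simp
qed

text \<open>Above these levels branch \<open>h\<close> carries only multiplicity \<open>1\<close> and is glued to no other branch.\<close>

definition conductor_levels :: "nat \<Rightarrow> (nat \<Rightarrow> nat \<Rightarrow> nat) \<Rightarrow> (nat \<Rightarrow> nat) \<Rightarrow> nat \<Rightarrow> nat" where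
  "conductor_levels r M p h = (if h < r then max (ms_length (M h))
      (max (if 0 < h then p (h - 1) else 0) (if Suc h < r then p h else 0)) else 0)"

lemma conductor_levels_ge:
  "h < r \<Longrightarrow> ms_length (M h) \<le> conductor_levels r M p h"
  "h < r \<Longrightarrow> 0 < h \<Longrightarrow> p (h - 1) \<le> conductor_levels r M p h"
  "Suc h < r \<Longrightarrow> p h \<le> conductor_levels r M p h"
  by (auto simp: conductor_levels_def)

lemma conductor_levels_cases:
  assumes "h < r"
  obtains (multiplicity) "conductor_levels r M p h = ms_length (M h)"
    | (left) "0 < h" "conductor_levels r M p h = p (h - 1)"
    | (right) "Suc h < r" "conductor_levels r M p h = p h"
    | (zero) "conductor_levels r M p h = 0"
proof -
  have "conductor_levels r M p h \<in>
      {ms_length (M h), if 0 < h then p (h - 1) else 0, if Suc h < r then p h else 0}"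
    using assms by (simp add: conductor_levels_def max_def)
  then show ?thesis using that by (auto split: if_splits)
qed

lemma level_vecs_if_ge_conductor_levels:
  assumes "r \<ge> 1" "\<forall>k. k + 1 < r \<longrightarrow> p k \<ge> 1" "e \<in> vecs r" "conductor_levels r M p \<le> e"
  shows "e \<in> level_vecs r p"
proof -
  have ge: "p k \<le> e k" "p k \<le> e (Suc k)" if "Suc k < r" for k
    using conductor_levels_ge(3)[OF that, of p M] conductor_levels_ge(2)[of "Suc k" r p M] that
      le_funD[OF assms(4), of k] le_funD[OF assms(4), of "Suc k"] by simp_all
  then have "levels_compatible r p e"
    by (simp add: levels_compatible_def min_absorb2)
  moreover have "e = (\<lambda>_. 0) \<or> (\<forall>i<r. 1 \<le> e i)"
  proof (cases "r = 1")
    case True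
    have "e i = 0" if "e 0 = 0" for i
      using that assms(3) True by (cases i) (auto simp: vecs_def)
    then show ?thesis using True by auto
  next
    case False
    have "1 \<le> e i" if "i < r" for i
    proof (cases i)
      case 0
      have "Suc 0 < r" using assms(1) False by simp
      then have "1 \<le> p 0" using assms(2) by simp
      then show ?thesis using ge(1)[OF \<open>Suc 0 < r\<close>] 0 by simp
    next
      case (Suc k)
      then show ?thesis using ge(2)[of k] assms(2) that by fastforce
    qed
    then show ?thesis by blast
  qed
  ultimately show ?thesis using assms(3) by (simp add: level_vecs_def)
qed

lemma conductor_levels_in_level_vecs:
  "r \<ge> 1 \<Longrightarrow> \<forall>k. k + 1 < r \<longrightarrow> p k \<ge> 1 \<Longrightarrow> conductor_levels r M p \<in> level_vecs r p"
  by (rule level_vecs_if_ge_conductor_levels) (auto simp: vecs_def conductor_levels_def)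

lemma ge_conductor_in_image:
  assumes "r \<ge> 1" "\<forall>k<r. multiplicity_sequence (M k)" "\<forall>k. k + 1 < r \<longrightarrow> p k \<ge> 1"
    and "v \<in> vecs r" "tree_elem r M (conductor_levels r M p) \<le> v"
  shows "v \<in> tree_elem r M ` level_vecs r p"
proof -
  define L where "L = conductor_levels r M p"
  define e where "e h = (if h < r then L h + (v h - ms_sum (M h) (L h)) else 0)" for h
  have le: "ms_sum (M h) (L h) \<le> v h" if "h < r" for h
    using le_funD[OF assms(5), of h] that by (simp add: tree_elem_def L_def)
  have "tree_elem r M e = v"
  proof
    fix h
    show "tree_elem r M e h = v h"
    proof (cases "h < r")
      case True
      have "ms_length (M h) \<le> L h" using conductor_levels_ge(1)[OF True] by (simp add: L_def)
      then have "ms_sum (M h) (L h + (v h - ms_sum (M h) (L h)))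
          = ms_sum (M h) (L h) + (v h - ms_sum (M h) (L h))"
        using ms_sum_beyond_length assms(2) True by blast
      also have "\<dots> = v h" using le[OF True] by simp
      finally have "ms_sum (M h) (L h + (v h - ms_sum (M h) (L h))) = v h" .
      then show ?thesis using True by (simp add: tree_elem_def e_def)
    qed (use assms(4) in \<open>simp add: tree_elem_def vecs_def\<close>)
  qed
  moreover have "e \<in> level_vecs r p"
    using assms(1,3) by (intro level_vecs_if_ge_conductor_levels[where M = M])
      (auto simp: vecs_def e_def le_fun_def L_def conductor_levels_def)
  ultimately show ?thesis by blast
qed

lemma conductor_levels_sharp:
  assumes "\<forall>k<r. multiplicity_sequence (M k)" "h < r" "e \<in> level_vecs r p"
    and ge: "\<And>g. g < r \<Longrightarrow> g \<noteq> h \<Longrightarrow> conductor_levels r M p g \<le> e g"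
  shows "ms_sum (M h) (e h) + 1 \<noteq> ms_sum (M h) (conductor_levels r M p h)"
proof
  define L where "L = conductor_levels r M p"
  have ms: "multiplicity_sequence (M h)" using assms(1,2) by simp
  have compat: "levels_compatible r p e" using assms(3) by (simp add: level_vecs_def)
  assume "ms_sum (M h) (e h) + 1 = ms_sum (M h) (conductor_levels r M p h)"
  then have eq: "ms_sum (M h) (e h) + 1 = ms_sum (M h) (L h)" by (simp add: L_def)
  then have "e h < L h" using strict_mono_ms_sum[OF ms] by (metis less_add_one strict_mono_less)
  from assms(2) show False
  proof (cases rule: conductor_levels_cases[of h r M p])
    case multiplicity
    then have "L h = ms_length (M h)" by (simp add: L_def)
    moreover obtain q where q: "L h = Suc q" "e h \<le> q" using \<open>e h < L h\<close> by (cases "L h") auto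
    ultimately have "2 \<le> M h (Suc q)" using multiplicity_sequence_length(2)[OF ms] by simp
    moreover have "ms_sum (M h) (e h) \<le> ms_sum (M h) q"
      using q(2) strict_mono_ms_sum[OF ms] by (simp add: strict_mono_less_eq)
    ultimately show False using eq q(1) by (simp add: ms_sum_Suc)
  next
    case left
    then have "h - 1 < r" "h - 1 \<noteq> h" "Suc (h - 1) < r" using assms(2) by auto
    then have "p (h - 1) \<le> e (h - 1)"
      using ge[of "h - 1"] conductor_levels_ge(3)[of "h - 1" r p M] by (meson le_trans)
    moreover have "min (e (h - 1)) (p (h - 1)) = min (e h) (p (h - 1))"
      using compat left assms(2) by (auto simp: levels_compatible_def dest: spec[of _ "h - 1"])
    ultimately show False using \<open>e h < L h\<close> left by (simp add: L_def)
  next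
    case right
    then have "p h \<le> e (Suc h)"
      using ge[of "Suc h"] conductor_levels_ge(2)[of "Suc h" r p M] by simp
    moreover have "min (e h) (p h) = min (e (Suc h)) (p h)"
      using compat right by (simp add: levels_compatible_def)
    ultimately show False using \<open>e h < L h\<close> right by (simp add: L_def)
  next
    case zero
    then show False using \<open>e h < L h\<close> by (simp add: L_def)
  qed
qed

lemma conductor_tree_semigroup:
  assumes r1: "r \<ge> 1" and hM: "\<forall>k<r. multiplicity_sequence (M k)"
    and hp: "\<forall>k. k + 1 < r \<longrightarrow> p k \<ge> 1"
  shows "conductor r (tree_semigroup r M p) = tree_elem r M (conductor_levels r M p)"
  unfolding conductor_def
proof (rule Least_equality)
  define L where "L = conductor_levels r M p"
  have S: "tree_semigroup r M p = tree_elem r M ` level_vecs r p"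
    using tree_semigroup_eq_image[OF r1 hp] .
  show "tree_elem r M L \<in> vecs r \<and> (\<forall>v\<in>vecs r. tree_elem r M L \<le> v \<longrightarrow> v \<in> tree_semigroup r M p)"
    using ge_conductor_in_image[OF assms] S by (auto simp: L_def tree_elem_def vecs_def)
  fix d assume d: "d \<in> vecs r \<and> (\<forall>v\<in>vecs r. d \<le> v \<longrightarrow> v \<in> tree_semigroup r M p)"
  show "tree_elem r M L \<le> d"
  proof (rule le_funI, rule ccontr)
    fix h assume not_le: "\<not> tree_elem r M L h \<le> d h"
    then have "h < r" by (cases "h < r") (simp_all add: tree_elem_def)
    text \<open>Lower \<open>d\<close> on branch \<open>h\<close> to just below the conductor and raise it far up elsewhere.\<close>
    define v where "v g = (if g = h then ms_sum (M h) (L h) - 1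
      else if g < r then d g + ms_sum (M g) (L g) else 0)" for g
    have "v \<in> vecs r" using \<open>h < r\<close> by (simp add: v_def vecs_def)
    moreover have "d \<le> v" using not_le d \<open>h < r\<close> by (auto simp: le_fun_def v_def vecs_def tree_elem_def)
    ultimately obtain e where e: "e \<in> level_vecs r p" "v = tree_elem r M e"
      using d S by blast
    have "ms_sum (M h) (e h) + 1 = ms_sum (M h) (L h)"
      using fun_cong[OF e(2), of h] not_le \<open>h < r\<close> by (simp add: v_def tree_elem_def)
    moreover have "L g \<le> e g" if "g < r" "g \<noteq> h" for g
    proof -
      have "ms_sum (M g) (L g) \<le> ms_sum (M g) (e g)"
        using fun_cong[OF e(2), of g] that by (simp add: v_def tree_elem_def)
      then show ?thesis using hM that strict_mono_ms_sum strict_mono_less_eq by blast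
    qed
    ultimately show False using conductor_levels_sharp[OF hM \<open>h < r\<close> e(1)] by (simp add: L_def)
  qed
qed

lemma glued_leftmost_unique:
  assumes "glued p j i i'" "i = 0 \<or> p (i - 1) < j" "i' = 0 \<or> p (i' - 1) < j"
  shows "i = i'"
proof -
  have not_less: "\<not> a < b" if "glued p j a b" "b = 0 \<or> p (b - 1) < j" for a b
  proof
    assume "a < b"
    then have "min a b \<le> b - 1 \<and> b - 1 < max a b" by simp
    then have "j \<le> p (b - 1)" using that(1) unfolding glued_def by blast
    with that(2) \<open>a < b\<close> show False by simp
  qed
  show ?thesis
    using not_less[OF assms(1,3)] not_less[OF glued_sym[OF assms(1)] assms(2)] by simp
qed

lemma glued_leftmost_exists:
  obtains i0 where "i0 \<le> i" "glued p j i0 i" "i0 = 0 \<or> p (i0 - 1) < j"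
proof -
  define i0 where "i0 = (LEAST h. glued p j h i)"
  have "glued p j i0 i" unfolding i0_def by (rule LeastI[of _ i]) simp
  moreover have "i0 \<le> i" unfolding i0_def by (rule Least_le) simp
  moreover have "i0 = 0 \<or> p (i0 - 1) < j"
  proof (rule ccontr)
    assume "\<not> (i0 = 0 \<or> p (i0 - 1) < j)"
    then have "0 < i0" "glued p j (i0 - 1) i0" using glued_Suc_iff[of p j "i0 - 1"] by auto
    then have "glued p j (i0 - 1) i" using \<open>glued p j i0 i\<close> glued_trans by blast
    then have "i0 \<le> i0 - 1" unfolding i0_def by (rule Least_le)
    with \<open>0 < i0\<close> show False by simp
  qed
  ultimately show thesis using that by blast
qed

text \<open>Each node is counted once, on the leftmost branch through it.\<close>

lemma card_level_subtree:
  assumes "levels_compatible r p e"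
  shows "card (level_subtree r p e) = (\<Sum>i<r. card {j \<in> {1..e i}. i = 0 \<or> p (i - 1) < j})"
proof -
  define C where "C i = {j \<in> {1..e i}. i = 0 \<or> p (i - 1) < j}" for i
  define D where "D = (SIGMA i:{..<r}. C i)"
  have "inj_on (\<lambda>(i, j). node r p i j) D"
  proof (rule inj_onI, clarify)
    fix i j i' j' assume ij: "(i, j) \<in> D" "(i', j') \<in> D" "node r p i j = node r p i' j'"
    then have "j = j'" "glued p j i i'" using node_eq_iff[of i r i'] by (auto simp: D_def)
    moreover have "i = i'"
      using glued_leftmost_unique[OF \<open>glued p j i i'\<close>] ij(1,2) \<open>j = j'\<close> by (simp add: D_def C_def)
    ultimately show "i = i' \<and> j = j'" by simp
  qed
  moreover have "(\<lambda>(i, j). node r p i j) ` D = level_subtree r p e"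
  proof
    show "(\<lambda>(i, j). node r p i j) ` D \<subseteq> level_subtree r p e"
      by (fastforce simp: D_def C_def mem_level_subtree)
  next
    show "level_subtree r p e \<subseteq> (\<lambda>(i, j). node r p i j) ` D"
    proof
      fix nd assume "nd \<in> level_subtree r p e"
      then obtain i j where ij: "i < r" "1 \<le> j" "j \<le> e i" "nd = node r p i j"
        by (auto simp: mem_level_subtree)
      obtain i0 where i0: "i0 \<le> i" "glued p j i0 i" "i0 = 0 \<or> p (i0 - 1) < j"
        using glued_leftmost_exists .
      then have "i0 < r" "j \<le> e i0"
        using ij glued_le_level_iff[OF assms, of i0 i j] by auto
      then have "(i0, j) \<in> D" using ij(2) i0(3) by (simp add: D_def C_def)
      moreover have "node r p i0 j = node r p i j" using node_eq_iff[OF \<open>i0 < r\<close> ij(1)] i0(2) by simp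
      then have "nd = node r p i0 j" using ij(4) by simp
      ultimately show "nd \<in> (\<lambda>(i, j). node r p i j) ` D" by (simp add: rev_image_eqI)
    qed
  qed
  ultimately have "card (level_subtree r p e) = card D" using card_image by fastforce
  then show ?thesis by (simp add: D_def C_def)
qed

lemma card_level_subtree_add_glue:
  assumes "r \<ge> 1" "levels_compatible r p e" "\<forall>i. 0 < i \<longrightarrow> i < r \<longrightarrow> p (i - 1) \<le> e i"
  shows "card (level_subtree r p e) + (\<Sum>k<r-1. p k) = (\<Sum>i<r. e i)"
proof -
  obtain r' where r': "r = Suc r'" using assms(1) by (cases r) auto
  have "{j \<in> {1..e 0}. (0::nat) = 0 \<or> p (0 - 1) < j} = {1..e 0}" by auto
  then have first: "card {j \<in> {1..e 0}. (0::nat) = 0 \<or> p (0 - 1) < j} = e 0" by simp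
  have rest: "card {j \<in> {1..e (Suc k)}. Suc k = 0 \<or> p (Suc k - 1) < j} = e (Suc k) - p k" for k
  proof -
    have "{j \<in> {1..e (Suc k)}. Suc k = 0 \<or> p (Suc k - 1) < j} = {Suc (p k)..e (Suc k)}" by auto
    then show ?thesis by simp
  qed
  have count: "card (level_subtree r p e) = e 0 + (\<Sum>k<r'. e (Suc k) - p k)"
    using card_level_subtree[OF assms(2)] unfolding r' sum.lessThan_Suc_shift first rest .
  have summand: "e (Suc k) - p k + p k = e (Suc k)" if "k < r'" for k
  proof -
    have "p (Suc k - 1) \<le> e (Suc k)" using assms(3) that r' by blast
    then show ?thesis by simp
  qed
  have "(\<Sum>k<r'. e (Suc k) - p k) + (\<Sum>k<r'. p k) = (\<Sum>k<r'. e (Suc k))"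
    unfolding sum.distrib[symmetric] by (rule sum.cong) (simp_all add: summand)
  with count show ?thesis unfolding r' sum.lessThan_Suc_shift by simp
qed

lemma ms_sum_eq_ns_genus_add:
  assumes "multiplicity_sequence m" "ms_length m \<le> x"
  shows "ms_sum m x = ns_genus (AS m) + x"
proof -
  have "ms_sum m x = ms_sum m (ms_length m) + (x - ms_length m)"
    using ms_sum_beyond_length[OF assms(1) order.refl, of "x - ms_length m"] assms(2) by simp
  moreover have "ms_length m \<le> ms_sum m (ms_length m)" by (rule ms_sum_ge[OF assms(1)])
  ultimately show ?thesis using ns_genus_AS[OF assms(1)] assms(2) by simp
qed

theorem mainTheorem1:
  fixes r :: nat and M :: "nat \<Rightarrow> nat \<Rightarrow> nat" and p :: "nat \<Rightarrow> nat"
  assumes "r \<ge> 1"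
    and "\<forall>k<r. multiplicity_sequence (M k)"
    and "\<forall>k. k + 1 < r \<longrightarrow> p k \<ge> 1"
    and "good_semigroup r (tree_semigroup r M p)"
    and "local_sg r (tree_semigroup r M p)"
    and "arf_sg (tree_semigroup r M p)"
  shows "good_genus r (tree_semigroup r M p)
           = (\<Sum>k<r. ns_genus (AS (M k))) + (\<Sum>k<r-1. p k)"
proof -
  define L where "L = conductor_levels r M p"
  have L: "L \<in> level_vecs r p"
    unfolding L_def using conductor_levels_in_level_vecs[OF assms(1,3)] .
  have genus: "good_genus r (tree_semigroup r M p)
      = (\<Sum>k<r. tree_elem r M L k) - card (level_subtree r p L)"
    unfolding good_genus_def conductor_tree_semigroup[OF assms(1-3), folded L_def]
      saturated_chain_length_tree_semigroup[OF assms(1-3) L] ..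
  have "tree_elem r M L k = ns_genus (AS (M k)) + L k" if "k < r" for k
    using ms_sum_eq_ns_genus_add assms(2) conductor_levels_ge(1)[OF that] that
    by (simp add: tree_elem_def L_def)
  then have "(\<Sum>k<r. tree_elem r M L k) = (\<Sum>k<r. ns_genus (AS (M k))) + (\<Sum>k<r. L k)"
    by (simp add: sum.distrib)
  moreover have "card (level_subtree r p L) + (\<Sum>k<r-1. p k) = (\<Sum>k<r. L k)"
    using card_level_subtree_add_glue[OF assms(1)] L conductor_levels_ge(2)
    by (simp add: level_vecs_def L_def)
  ultimately show ?thesis using genus by simp
qed

end
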